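(* Assume the standing setting (A1)–(A7) described in the context. For sufficiently small $h>0$ and $i\in\{1,2,3,4\}$, let $\bar x_i(h)$ be the abscissa of the unique intersection point of the graph of $g_i$ with $\partial B(h)$, and let $B_h(x):=\sqrt{(a-h)^2-x^2}$. Let $\eta_i(h)\in[0,2\pi)$ be the polar angle of the point $(\bar x_i(h),B_h(\bar x_i(h)))$ if $i\in\{1,2\}$ and of the point $(\bar x_i(h),-B_h(\bar x_i(h)))$ if $i\in\{3,4\}$, and put $\gamma_1(h)=\eta_1(h)$, $\gamma_2(h)=\pi-\eta_2(h)$, $\gamma_3(h)=\eta_3(h)-\pi$, $\gamma_4(h)=2\pi-\eta_4(h)$. Then for each $i\in\{1,2,3,4\}$, $\gamma_i(h)\sim\tau_i h^{1/2}$ as $h\to0$, where $\tau_i=\frac{3}{2a}c_i$ and $c_i=\frac{2q_i\sqrt{2a}}{3\sqrt{4-q_i^2}}$.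
   Context: Standing setting. $f$ is a Lebesgue density on $\mathbb{R}^2$ with compact support $E\subset\mathbb{R}^2$. $|\cdot|$ is the Euclidean norm, $\lambda^2$ Lebesgue measure, $A^\circ$ the interior, $\partial A$ the boundary, $\mathrm{diam}(A)=\sup\{|x-y|:x,y\in A\}$. For $0\le h<a$, $B(h)=\{z\in\mathbb{R}^2:|z|\le a-h\}$; $U(x,\varepsilon)=\{z:|z-(x,0)|<\varepsilon\}$; $Q_1,\dots,Q_4$ are the open quadrants, $Q_1=\{x>0,y>0\}$, numbered anticlockwise; $E_i:=E\cap Q_i$; $f_a(x)=\sqrt{a^2-x^2}/2$. Assumptions: (A1) $a>0$, $\mathrm{diam}(E)=2a$, $\inf\{x:(x,y)\in E\}=-a$, $\sup\{x:(x,y)\in E\}=a$. (A2) For each $\varepsilon>0$, $\mathrm{diam}(E\setminus(U(-a,\varepsilon)\cup U(a,\varepsilon)))<2a$. (A3) For each $\varepsilon>0$, $\lambda^2(E_i\cap U(a,\varepsilon))>0$ for $i\in\{1,4\}$, $\lambda^2(E_j\cap U(-a,\varepsilon))>0$ for $j\in\{2,3\}$. (A4) There are $\nu\in[0,a)$ and continuous $g_1:[\nu,a]\to[0,\infty)$, $g_4:[\nu,a]\to(-\infty,0]$, $g_1(a)=g_4(a)=0$, with $E^\circ\cap\{x>\nu\}=\{(x,y):\nu<x<a,\ g_4(x)<y<g_1(x)\}$, and continuous $g_2:[-a,-\nu]\to[0,\infty)$, $g_3:[-a,-\nu]\to(-\infty,0]$, $g_2(-a)=g_3(-a)=0$, with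 $E^\circ\cap\{x<-\nu\}=\{(x,y):-a<x<-\nu,\ g_3(x)<y<g_2(x)\}$. (A5) Constants $q_1,\dots,q_4\in(0,2)$ with $g_1/f_a\to q_1$, $-g_4/f_a\to q_4$ as $x\to a$ and $g_2/f_a\to q_2$, $-g_3/f_a\to q_3$ as $x\to-a$. (A6) For each $i$ and sufficiently small $h>0$: $E_i^\circ\cap\{|x|<\nu\}\subset B(h)$, and the graph of $g_i$ meets $\partial B(h)$ in exactly one point. (A7) For small $\varepsilon>0$, $f$ is continuous on $E\cap U(\pm a,\varepsilon)$, and $f((a,0))>0$, $f((-a,0))>0$. $g(h)\sim k(h)$ means $g(h)/k(h)\to1$. *)

theory Defs
  imports "HOL-Analysis.Analysis"
begin

definition Ball_h :: "real \<Rightarrow> real \<Rightarrow> (real \<times> real) set" where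
  "Ball_h a h = cball 0 (a - h)"

definition U :: "real \<Rightarrow> real \<Rightarrow> (real \<times> real) set" where
  "U x \<epsilon> = ball (x, 0) \<epsilon>"

definition Q1 :: "(real \<times> real) set" where "Q1 = {z. fst z > 0 \<and> snd z > 0}"
definition Q2 :: "(real \<times> real) set" where "Q2 = {z. fst z < 0 \<and> snd z > 0}"
definition Q3 :: "(real \<times> real) set" where "Q3 = {z. fst z < 0 \<and> snd z < 0}"
definition Q4 :: "(real \<times> real) set" where "Q4 = {z. fst z > 0 \<and> snd z < 0}"

definition f_a :: "real \<Rightarrow> real \<Rightarrow> real" where
  "f_a a x = sqrt (a\<^sup>2 - x\<^sup>2) / 2"

definition graph_on :: "(real \<Rightarrow> real) \<Rightarrow> real set \<Rightarrow> (real \<times> real) set" where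
  "graph_on g D = {(x, g x) | x. x \<in> D}"

definition xbar :: "(real \<Rightarrow> real) \<Rightarrow> real set \<Rightarrow> real \<Rightarrow> real \<Rightarrow> real" where
  "xbar g D a h = (THE x. x \<in> D \<and> (x, g x) \<in> frontier (Ball_h a h))"

definition B_fun :: "real \<Rightarrow> real \<Rightarrow> real \<Rightarrow> real" where
  "B_fun a h x = sqrt ((a - h)\<^sup>2 - x\<^sup>2)"

definition polar_angle :: "real \<times> real \<Rightarrow> real" where
  "polar_angle p = (THE \<theta>. 0 \<le> \<theta> \<and> \<theta> < 2 * pi \<and>
       p = (norm p * cos \<theta>, norm p * sin \<theta>))"

definition eta_up :: "(real \<Rightarrow> real) \<Rightarrow> real set \<Rightarrow> real \<Rightarrow> real \<Rightarrow> real" where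
  "eta_up g D a h = polar_angle (xbar g D a h, B_fun a h (xbar g D a h))"

definition eta_down :: "(real \<Rightarrow> real) \<Rightarrow> real set \<Rightarrow> real \<Rightarrow> real \<Rightarrow> real" where
  "eta_down g D a h = polar_angle (xbar g D a h, - B_fun a h (xbar g D a h))"

definition c_const :: "real \<Rightarrow> real \<Rightarrow> real" where
  "c_const a q = 2 * q * sqrt (2 * a) / (3 * sqrt (4 - q\<^sup>2))"

definition tau_const :: "real \<Rightarrow> real \<Rightarrow> real" where
  "tau_const a q = 3 / (2 * a) * c_const a q"

end

theory Submission
  imports Defs
begin

text \<open>
  Let \<open>X(h)\<close> be the abscissa of the point where a branch meets the circle of radius \<open>a - h\<close>
  and \<open>Y(h) = \<bar>g(X(h))\<bar>\<close> its height, so \<open>X\<^sup>2 + Y\<^sup>2 = (a - h)\<^sup>2\<close>. Because near \<open>a\<close> the branch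
  lies inside the disc of radius \<open>a\<close> (as \<open>q < 2\<close>) and ends at \<open>(a, 0)\<close>, the intermediate value
  theorem and uniqueness of the intersection force \<open>X(h) \<rightarrow> a\<close>; hence
  \<open>R(h) = Y / f_a(X) \<rightarrow> q\<close>. From \<open>a\<^sup>2 - X\<^sup>2 = 4 Y\<^sup>2 / R\<^sup>2\<close> and \<open>a\<^sup>2 - X\<^sup>2 - Y\<^sup>2 = h (2a - h)\<close> we get
  \<open>Y\<^sup>2 (4 - R\<^sup>2) = R\<^sup>2 h (2a - h)\<close>, so \<open>Y \<sim> q \<surd>(2a / (4 - q\<^sup>2)) \<surd>h = a \<tau> \<surd>h\<close>. In every
  quadrant the angle \<open>\<gamma>(h)\<close> is \<open>arcsin (Y / (a - h)) \<sim> Y / a \<sim> \<tau> \<surd>h\<close>.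
\<close>

lemma tendsto_arcsin_div_self: "((\<lambda>y. arcsin y / y) \<longlongrightarrow> 1) (at 0)"
proof -
  have "(arcsin has_real_derivative inverse (sqrt (1 - 0\<^sup>2))) (at 0)"
    by (rule DERIV_arcsin) auto
  thus ?thesis
    unfolding has_field_derivative_iff by simp
qed

lemma polar_angle_cos_sin:
  assumes "0 < r" "0 \<le> t" "t < 2 * pi"
  shows "polar_angle (r * cos t, r * sin t) = t"
proof -
  have norm_eq: "norm (r * cos t, r * sin t) = r"
    using assms(1) by (simp add: norm_Pair power_mult_distrib flip: distrib_left)
  show ?thesis
    unfolding polar_angle_def norm_eq
  proof (rule the_equality)
    fix s assume s: "0 \<le> s \<and> s < 2 * pi \<and> (r * cos t, r * sin t) = (r * cos s, r * sin s)"
    hence "sin s = sin t \<and> cos s = cos t" using assms(1) by auto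
    then obtain n :: int where n: "s = t + 2 * pi * n" by (auto simp: sin_cos_eq_iff)
    have "\<bar>2 * pi * n\<bar> < 2 * pi * 1" using s assms n by linarith
    hence "n = 0" by (simp add: abs_mult)
    thus "s = t" using n by simp
  qed (use assms in auto)
qed

lemma polar_angle_arcsin:
  fixes x y r :: real
  assumes circle: "x\<^sup>2 + y\<^sup>2 = r\<^sup>2" and r: "0 < r" and y: "0 < y"
  shows "0 \<le> x \<Longrightarrow> polar_angle (x, y) = arcsin (y / r)"
    and "x \<le> 0 \<Longrightarrow> polar_angle (x, y) = pi - arcsin (y / r)"
    and "x \<le> 0 \<Longrightarrow> polar_angle (x, - y) = pi + arcsin (y / r)"
    and "0 \<le> x \<Longrightarrow> polar_angle (x, - y) = 2 * pi - arcsin (y / r)"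
proof -
  define u where "u = arcsin (y / r)"
  have "y\<^sup>2 \<le> r\<^sup>2" using circle zero_le_power2[of x] by linarith
  hence yr: "0 < y / r" "y / r \<le> 1" using r y by (auto simp: power2_le_iff_abs_le)
  have u: "0 < u" "u \<le> pi / 2"
    using yr arcsin_less_arcsin[of 0 "y / r"] arcsin_le_arcsin[of "y / r" 1] by (auto simp: u_def)
  have sin_u: "r * sin u = y" using yr r by (simp add: u_def)
  have "1 - (y / r)\<^sup>2 = (\<bar>x\<bar> / r)\<^sup>2" using circle r by (simp add: field_simps)
  hence cos_u: "r * cos u = \<bar>x\<bar>" using yr r by (simp add: u_def cos_arcsin)
  show "0 \<le> x \<Longrightarrow> polar_angle (x, y) = arcsin (y / r)"
    using polar_angle_cos_sin[OF r, of u] u sin_u cos_u by (simp add: u_def)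
  show "x \<le> 0 \<Longrightarrow> polar_angle (x, y) = pi - arcsin (y / r)"
    using polar_angle_cos_sin[OF r, of "pi - u"] u sin_u cos_u by (simp add: u_def)
  show "x \<le> 0 \<Longrightarrow> polar_angle (x, - y) = pi + arcsin (y / r)"
    using polar_angle_cos_sin[OF r, of "pi + u"] u sin_u cos_u by (simp add: u_def)
  show "0 \<le> x \<Longrightarrow> polar_angle (x, - y) = 2 * pi - arcsin (y / r)"
    using polar_angle_cos_sin[OF r, of "2 * pi - u"] u sin_u cos_u
    by (simp add: u_def cos_diff sin_diff)
qed

lemma frontier_Ball_h_iff:
  assumes "0 < a - h"
  shows "(x, y) \<in> frontier (Ball_h a h) \<longleftrightarrow> x\<^sup>2 + y\<^sup>2 = (a - h)\<^sup>2"
proof -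
  have "sqrt (x\<^sup>2 + y\<^sup>2) = a - h \<longleftrightarrow> x\<^sup>2 + y\<^sup>2 = (a - h)\<^sup>2"
  proof
    assume "sqrt (x\<^sup>2 + y\<^sup>2) = a - h"
    hence "(sqrt (x\<^sup>2 + y\<^sup>2))\<^sup>2 = (a - h)\<^sup>2" by simp
    thus "x\<^sup>2 + y\<^sup>2 = (a - h)\<^sup>2" by simp
  qed (use assms in simp)
  thus ?thesis by (simp add: Ball_h_def frontier_cball norm_Pair)
qed

lemma ex1_graph_on_iff:
  "(\<exists>!p. p \<in> graph_on g D \<inter> S) \<longleftrightarrow> (\<exists>!x. x \<in> D \<and> (x, g x) \<in> S)"
proof
  assume "\<exists>!p. p \<in> graph_on g D \<inter> S"
  then obtain x where x: "x \<in> D" "(x, g x) \<in> S"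
    and uniq: "\<And>p. p \<in> graph_on g D \<inter> S \<Longrightarrow> p = (x, g x)"
    unfolding graph_on_def by blast
  show "\<exists>!x. x \<in> D \<and> (x, g x) \<in> S"
  proof (rule ex1I[of _ x])
    fix y assume "y \<in> D \<and> (y, g y) \<in> S"
    hence "(y, g y) \<in> graph_on g D \<inter> S" unfolding graph_on_def by blast
    thus "y = x" using uniq by blast
  qed (use x in blast)
next
  assume "\<exists>!x. x \<in> D \<and> (x, g x) \<in> S"
  then obtain x where x: "x \<in> D" "(x, g x) \<in> S"
    and uniq: "\<And>y. y \<in> D \<Longrightarrow> (y, g y) \<in> S \<Longrightarrow> y = x" by blast
  show "\<exists>!p. p \<in> graph_on g D \<inter> S"
  proof (rule ex1I[of _ "(x, g x)"])
    show "(x, g x) \<in> graph_on g D \<inter> S" using x unfolding graph_on_def by blast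
    fix p assume "p \<in> graph_on g D \<inter> S"
    then obtain y where "p = (y, g y)" "y \<in> D" "(y, g y) \<in> S" unfolding graph_on_def by blast
    thus "p = (x, g x)" using uniq by blast
  qed
qed

lemma xbar_on_circle:
  assumes h: "0 < a - h" and uniq: "\<exists>!p. p \<in> graph_on g D \<inter> frontier (Ball_h a h)"
  shows "xbar g D a h \<in> D"
    and "(xbar g D a h)\<^sup>2 + (g (xbar g D a h))\<^sup>2 = (a - h)\<^sup>2"
    and "\<And>x. x \<in> D \<Longrightarrow> x\<^sup>2 + (g x)\<^sup>2 = (a - h)\<^sup>2 \<Longrightarrow> x = xbar g D a h"
proof -
  have ex1: "\<exists>!x. x \<in> D \<and> (x, g x) \<in> frontier (Ball_h a h)"
    using ex1_graph_on_iff[THEN iffD1, OF uniq] .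
  show "xbar g D a h \<in> D" "(xbar g D a h)\<^sup>2 + (g (xbar g D a h))\<^sup>2 = (a - h)\<^sup>2"
    using theI'[OF ex1] frontier_Ball_h_iff[OF h] unfolding xbar_def by auto
  show "x = xbar g D a h" if "x \<in> D" "x\<^sup>2 + (g x)\<^sup>2 = (a - h)\<^sup>2" for x
    using the1_equality[OF ex1] that frontier_Ball_h_iff[OF h] unfolding xbar_def by auto
qed

lemma B_fun_eq_abs: "x\<^sup>2 + y\<^sup>2 = (a - h)\<^sup>2 \<Longrightarrow> B_fun a h x = \<bar>y\<bar>"
  unfolding B_fun_def by (simp add: eq_diff_eq[symmetric] del: eq_diff_eq)

lemma eventually_inside_disc:
  assumes a: "0 < a" and lim: "((\<lambda>x. \<bar>g x\<bar> / f_a a x) \<longlongrightarrow> q) (at_left a)" and q: "q < 2"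
  shows "\<forall>\<^sub>F x in at_left a. x\<^sup>2 + (g x)\<^sup>2 < a\<^sup>2"
proof -
  have "\<forall>\<^sub>F x in at_left a. \<bar>g x\<bar> / f_a a x < 2"
    using lim q by (rule order_tendstoD)
  moreover have "\<forall>\<^sub>F x in at_left a. x \<in> {0<..<a}"
    using a by (intro eventually_at_left_real)
  ultimately show ?thesis
  proof eventually_elim
    case (elim x)
    hence s: "0 < a\<^sup>2 - x\<^sup>2" by (simp add: power_strict_mono)
    hence "\<bar>g x\<bar> < sqrt (a\<^sup>2 - x\<^sup>2)" using elim by (simp add: f_a_def divide_less_eq)
    hence "\<bar>g x\<bar>\<^sup>2 < (sqrt (a\<^sup>2 - x\<^sup>2))\<^sup>2" by (intro power_strict_mono) auto
    thus ?case using s by simp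
  qed
qed

lemma eventually_at_right_0_less:
  "0 < a \<Longrightarrow> \<forall>\<^sub>F h in at_right (0::real). 0 < h \<and> h < a"
  using eventually_at_right_real[of 0 a] by (simp add: greaterThanLessThan_iff)

lemma circle_root_tendsto:
  fixes g X :: "real \<Rightarrow> real"
  assumes a: "0 < a" and nu: "\<nu> < a" and cont: "continuous_on {\<nu>..a} g" and ga: "g a = 0"
    and inside: "\<forall>\<^sub>F x in at_left a. x\<^sup>2 + (g x)\<^sup>2 < a\<^sup>2"
    and root: "\<forall>\<^sub>F h in at_right 0. X h \<in> {\<nu>..a} \<and> (X h)\<^sup>2 + (g (X h))\<^sup>2 = (a - h)\<^sup>2 \<and>
      (\<forall>x\<in>{\<nu>..a}. x\<^sup>2 + (g x)\<^sup>2 = (a - h)\<^sup>2 \<longrightarrow> x = X h)"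
  shows "filterlim X (at_left a) (at_right 0)"
proof -
  note small = eventually_at_right_0_less[OF a]
  have below: "\<forall>\<^sub>F h in at_right 0. X h < a"
    using root small
  proof eventually_elim
    case (elim h)
    hence "(X h)\<^sup>2 \<le> (a - h)\<^sup>2" using zero_le_power2[of "g (X h)"] by linarith
    hence "\<bar>X h\<bar> \<le> a - h" using elim by (simp add: power2_le_iff_abs_le)
    thus ?case using elim by linarith
  qed
  have "(X \<longlongrightarrow> a) (at_right 0)"
  proof (rule order_tendstoI)
    fix y assume "a < y"
    with below show "\<forall>\<^sub>F h in at_right 0. X h < y" by (auto elim: eventually_mono)
  next
    fix y assume "y < a"
    hence "\<forall>\<^sub>F x in at_left a. x \<in> {max y \<nu><..<a}" using nu by (intro eventually_at_left_real) simp
    then obtain x0 where x0: "max y \<nu> < x0" "x0 < a" "x0\<^sup>2 + (g x0)\<^sup>2 < a\<^sup>2"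
      using eventually_happens[OF eventually_conj[OF inside]] by auto
    have "((\<lambda>h. (a - h)\<^sup>2) \<longlongrightarrow> a\<^sup>2) (at_right 0)" by (intro tendsto_eq_intros) auto
    hence "\<forall>\<^sub>F h in at_right 0. x0\<^sup>2 + (g x0)\<^sup>2 < (a - h)\<^sup>2" using x0(3) by (rule order_tendstoD)
    thus "\<forall>\<^sub>F h in at_right 0. y < X h"
      using root small
    proof eventually_elim
      case (elim h)
      \<comment> \<open>The circle of radius \<open>a - h\<close> separates \<open>(x0, g x0)\<close> from \<open>(a, g a) = (a, 0)\<close>.\<close>
      define \<phi> where "\<phi> x = x\<^sup>2 + (g x)\<^sup>2" for x
      have "continuous_on {x0..a} \<phi>"
        unfolding \<phi>_def by (intro continuous_intros continuous_on_subset[OF cont]) (use x0 in auto)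
      moreover have "\<phi> x0 \<le> (a - h)\<^sup>2" "(a - h)\<^sup>2 \<le> \<phi> a"
      proof -
        show "\<phi> x0 \<le> (a - h)\<^sup>2" using elim by (simp add: \<phi>_def)
        show "(a - h)\<^sup>2 \<le> \<phi> a" using elim ga by (simp add: \<phi>_def power_mono)
      qed
      ultimately obtain x where x: "x0 \<le> x" "x \<le> a" "\<phi> x = (a - h)\<^sup>2"
        using IVT'[of \<phi> x0 "(a - h)\<^sup>2" a] x0 by auto
      moreover have "x \<in> {\<nu>..a}" using x x0 by simp
      ultimately have "X h = x" using elim by (simp add: \<phi>_def)
      thus ?case using x x0 by simp
    qed
  qed
  thus ?thesis
    unfolding filterlim_at using below by (auto elim: eventually_mono)
qed

lemma tau_const_eq:
  assumes "0 < a" "0 < q" "q < 2"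
  shows "a * tau_const a q = q * sqrt (2 * a / (4 - q\<^sup>2))"
proof -
  have "q\<^sup>2 < 2\<^sup>2" using assms by (intro power_strict_mono) auto
  thus ?thesis using assms unfolding tau_const_def c_const_def
    by (simp add: real_sqrt_divide field_simps)
qed

lemma tau_const_pos:
  assumes "0 < a" "0 < q" "q < 2"
  shows "0 < tau_const a q"
proof -
  have "q\<^sup>2 < 2\<^sup>2" using assms by (intro power_strict_mono) auto
  thus ?thesis using assms unfolding tau_const_def c_const_def by simp
qed

lemma circle_height_div_sqrt:
  fixes a h x y :: real
  defines "R \<equiv> y / f_a a x"
  assumes h: "0 < h" "h < a" and circle: "x\<^sup>2 + y\<^sup>2 = (a - h)\<^sup>2" and R: "0 < R" "R < 2"
  shows "0 < y" and "y / sqrt h = R * sqrt ((2 * a - h) / (4 - R\<^sup>2))"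
proof -
  define s where "s = a\<^sup>2 - x\<^sup>2"
  have "x\<^sup>2 \<le> (a - h)\<^sup>2" using circle zero_le_power2[of y] by linarith
  moreover have "(a - h)\<^sup>2 < a\<^sup>2" using h by (intro power_strict_mono) auto
  ultimately have s: "0 < s" by (simp add: s_def)
  hence y: "y = R * sqrt s / 2" by (simp add: R_def f_a_def s_def)
  show y_pos: "0 < y" unfolding y using R s by simp
  have R4: "0 < 4 - R\<^sup>2"
    using R power_strict_mono[of R 2 2] by simp
  have "(2 * y)\<^sup>2 = (R * sqrt s)\<^sup>2" unfolding y by simp
  hence four_y2: "4 * y\<^sup>2 = R\<^sup>2 * s" using s by (simp add: power_mult_distrib)
  have "y\<^sup>2 * (4 - R\<^sup>2) = R\<^sup>2 * (s - y\<^sup>2)"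
    using four_y2 by (simp add: algebra_simps)
  also have "s - y\<^sup>2 = h * (2 * a - h)"
    using circle by (simp add: s_def power2_eq_square algebra_simps)
  finally have "y\<^sup>2 * (4 - R\<^sup>2) = R\<^sup>2 * (h * (2 * a - h))" .
  hence "(y / sqrt h)\<^sup>2 = (R * sqrt ((2 * a - h) / (4 - R\<^sup>2)))\<^sup>2"
    using h R4 by (simp add: power_mult_distrib power_divide field_simps)
  moreover have "0 \<le> y / sqrt h" "0 \<le> R * sqrt ((2 * a - h) / (4 - R\<^sup>2))"
    using y_pos R h R4 by auto
  ultimately show "y / sqrt h = R * sqrt ((2 * a - h) / (4 - R\<^sup>2))"
    using power2_eq_imp_eq by blast
qed

lemma tendsto_circle_height:
  fixes X Y :: "real \<Rightarrow> real"
  assumes a: "0 < a" and q: "0 < q" "q < 2"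
    and circle: "\<forall>\<^sub>F h in at_right 0. (X h)\<^sup>2 + (Y h)\<^sup>2 = (a - h)\<^sup>2"
    and lim: "((\<lambda>h. Y h / f_a a (X h)) \<longlongrightarrow> q) (at_right 0)"
  shows "\<forall>\<^sub>F h in at_right 0. 0 < Y h"
    and "((\<lambda>h. Y h / sqrt h) \<longlongrightarrow> a * tau_const a q) (at_right 0)"
proof -
  define R where "R h = Y h / f_a a (X h)" for h
  have "\<forall>\<^sub>F h in at_right 0. 0 < R h \<and> R h < 2"
    using lim q unfolding R_def by (intro eventually_conj order_tendstoD)
  hence ev: "\<forall>\<^sub>F h in at_right 0. 0 < Y h \<and> Y h / sqrt h = R h * sqrt ((2 * a - h) / (4 - (R h)\<^sup>2))"
    using circle eventually_at_right_0_less[OF a]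
  proof eventually_elim
    case (elim h)
    thus ?case using circle_height_div_sqrt[of h a "X h" "Y h"] unfolding R_def by blast
  qed
  thus "\<forall>\<^sub>F h in at_right 0. 0 < Y h" by (rule eventually_mono) simp
  have "q\<^sup>2 < 2\<^sup>2" using q by (intro power_strict_mono) auto
  hence "((\<lambda>h. R h * sqrt ((2 * a - h) / (4 - (R h)\<^sup>2))) \<longlongrightarrow> q * sqrt ((2 * a - 0) / (4 - q\<^sup>2)))
      (at_right 0)"
    using lim unfolding R_def by (intro tendsto_intros) auto
  hence "((\<lambda>h. R h * sqrt ((2 * a - h) / (4 - (R h)\<^sup>2))) \<longlongrightarrow> a * tau_const a q) (at_right 0)"
    using tau_const_eq[OF a q] by simp
  thus "((\<lambda>h. Y h / sqrt h) \<longlongrightarrow> a * tau_const a q) (at_right 0)"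
    by (rule Lim_transform_eventually) (use ev in \<open>eventually_elim, simp\<close>)
qed

lemma tendsto_arcsin_circle_height:
  fixes X Y :: "real \<Rightarrow> real"
  assumes a: "0 < a" and q: "0 < q" "q < 2"
    and circle: "\<forall>\<^sub>F h in at_right 0. (X h)\<^sup>2 + (Y h)\<^sup>2 = (a - h)\<^sup>2"
    and lim: "((\<lambda>h. Y h / f_a a (X h)) \<longlongrightarrow> q) (at_right 0)"
  shows "((\<lambda>h. arcsin (Y h / (a - h)) / (tau_const a q * sqrt h)) \<longlongrightarrow> 1) (at_right 0)"
proof -
  note small = eventually_at_right_0_less[OF a]
  note Y_pos = tendsto_circle_height(1)[OF assms]
  note Y_sqrt = tendsto_circle_height(2)[OF assms]
  have tau: "0 < tau_const a q" using a q by (rule tau_const_pos)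
  have "((\<lambda>h. Y h / sqrt h * sqrt h) \<longlongrightarrow> a * tau_const a q * sqrt 0) (at_right 0)"
    by (intro tendsto_intros Y_sqrt)
  hence "((\<lambda>h. Y h / sqrt h * sqrt h) \<longlongrightarrow> 0) (at_right 0)" by simp
  hence "(Y \<longlongrightarrow> 0) (at_right 0)"
    by (rule Lim_transform_eventually) (use small in \<open>eventually_elim, simp\<close>)
  hence "((\<lambda>h. Y h / (a - h)) \<longlongrightarrow> 0 / (a - 0)) (at_right 0)"
    using a by (intro tendsto_intros) auto
  moreover have "\<forall>\<^sub>F h in at_right 0. Y h / (a - h) \<noteq> 0"
    using Y_pos small by eventually_elim simp
  ultimately have "filterlim (\<lambda>h. Y h / (a - h)) (at 0) (at_right 0)"
    by (intro filterlim_atI) simp_all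
  hence "((\<lambda>h. arcsin (Y h / (a - h)) / (Y h / (a - h))) \<longlongrightarrow> 1) (at_right 0)"
    by (rule filterlim_compose[OF tendsto_arcsin_div_self])
  hence "((\<lambda>h. arcsin (Y h / (a - h)) / (Y h / (a - h)) * (Y h / sqrt h) / ((a - h) * tau_const a q))
      \<longlongrightarrow> 1 * (a * tau_const a q) / ((a - 0) * tau_const a q)) (at_right 0)"
    using a tau by (intro tendsto_intros Y_sqrt) auto
  hence "((\<lambda>h. arcsin (Y h / (a - h)) / (Y h / (a - h)) * (Y h / sqrt h) / ((a - h) * tau_const a q))
      \<longlongrightarrow> 1) (at_right 0)"
    using a tau by simp
  thus ?thesis
    by (rule Lim_transform_eventually) (use Y_pos small in \<open>eventually_elim, use tau in simp\<close>)
qed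

lemma arcsin_branch_asymp:
  fixes g X :: "real \<Rightarrow> real"
  assumes a: "0 < a" and nu: "\<nu> < a" and cont: "continuous_on {\<nu>..a} g" and ga: "g a = 0"
    and lim: "((\<lambda>x. \<bar>g x\<bar> / f_a a x) \<longlongrightarrow> q) (at_left a)" and q: "0 < q" "q < 2"
    and root: "\<forall>\<^sub>F h in at_right 0. X h \<in> {\<nu>..a} \<and> (X h)\<^sup>2 + (g (X h))\<^sup>2 = (a - h)\<^sup>2 \<and>
      (\<forall>x\<in>{\<nu>..a}. x\<^sup>2 + (g x)\<^sup>2 = (a - h)\<^sup>2 \<longrightarrow> x = X h)"
  shows "\<forall>\<^sub>F h in at_right 0. 0 < \<bar>g (X h)\<bar>"
    and "((\<lambda>h. arcsin (\<bar>g (X h)\<bar> / (a - h)) / (tau_const a q * sqrt h)) \<longlongrightarrow> 1) (at_right 0)"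
proof -
  have "filterlim X (at_left a) (at_right 0)"
    using a nu cont ga eventually_inside_disc[OF a lim q(2)] root by (rule circle_root_tendsto)
  hence lim_X: "((\<lambda>h. \<bar>g (X h)\<bar> / f_a a (X h)) \<longlongrightarrow> q) (at_right 0)"
    by (rule filterlim_compose[OF lim])
  have circle: "\<forall>\<^sub>F h in at_right 0. (X h)\<^sup>2 + \<bar>g (X h)\<bar>\<^sup>2 = (a - h)\<^sup>2"
    using root by (rule eventually_mono) simp
  show "\<forall>\<^sub>F h in at_right 0. 0 < \<bar>g (X h)\<bar>"
    by (rule tendsto_circle_height(1)[OF a q circle lim_X])
  show "((\<lambda>h. arcsin (\<bar>g (X h)\<bar> / (a - h)) / (tau_const a q * sqrt h)) \<longlongrightarrow> 1) (at_right 0)"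
    by (rule tendsto_arcsin_circle_height[OF a q circle lim_X])
qed

lemma eta_right_asymp:
  fixes g :: "real \<Rightarrow> real"
  assumes nu: "0 \<le> \<nu>" "\<nu> < a" and cont: "continuous_on {\<nu>..a} g" and ga: "g a = 0"
    and lim: "((\<lambda>x. \<bar>g x\<bar> / f_a a x) \<longlongrightarrow> q) (at_left a)" and q: "0 < q" "q < 2"
    and uniq: "\<forall>\<^sub>F h in at_right 0. \<exists>!p. p \<in> graph_on g {\<nu>..a} \<inter> frontier (Ball_h a h)"
  shows "((\<lambda>h. eta_up g {\<nu>..a} a h / (tau_const a q * sqrt h)) \<longlongrightarrow> 1) (at_right 0)"
    and "((\<lambda>h. (2 * pi - eta_down g {\<nu>..a} a h) / (tau_const a q * sqrt h)) \<longlongrightarrow> 1) (at_right 0)"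
proof -
  define X where "X h = xbar g {\<nu>..a} a h" for h
  have a: "0 < a" using nu by linarith
  note small = eventually_at_right_0_less[OF a]
  have root: "\<forall>\<^sub>F h in at_right 0. X h \<in> {\<nu>..a} \<and> (X h)\<^sup>2 + (g (X h))\<^sup>2 = (a - h)\<^sup>2 \<and>
      (\<forall>x\<in>{\<nu>..a}. x\<^sup>2 + (g x)\<^sup>2 = (a - h)\<^sup>2 \<longrightarrow> x = X h)"
    using uniq small
  proof eventually_elim
    case (elim h)
    hence "0 < a - h" by simp
    thus ?case using xbar_on_circle[OF _ elim(1)] unfolding X_def by blast
  qed
  note branch = arcsin_branch_asymp[OF a nu(2) cont ga lim q root]
  have angles: "\<forall>\<^sub>F h in at_right 0. eta_up g {\<nu>..a} a h = arcsin (\<bar>g (X h)\<bar> / (a - h)) \<and>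
      2 * pi - eta_down g {\<nu>..a} a h = arcsin (\<bar>g (X h)\<bar> / (a - h))"
    using root branch(1) small
  proof eventually_elim
    case (elim h)
    hence circle: "(X h)\<^sup>2 + \<bar>g (X h)\<bar>\<^sup>2 = (a - h)\<^sup>2" and "0 \<le> X h" "0 < a - h" using nu by auto
    moreover have "B_fun a h (X h) = \<bar>g (X h)\<bar>" using B_fun_eq_abs[OF circle] by simp
    ultimately show ?case
      using polar_angle_arcsin(1,4)[OF circle \<open>0 < a - h\<close> elim(2)]
      unfolding eta_up_def eta_down_def X_def[symmetric] by simp
  qed
  show "((\<lambda>h. eta_up g {\<nu>..a} a h / (tau_const a q * sqrt h)) \<longlongrightarrow> 1) (at_right 0)"
    by (rule Lim_transform_eventually[OF branch(2)]) (use angles in \<open>eventually_elim, simp\<close>)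
  show "((\<lambda>h. (2 * pi - eta_down g {\<nu>..a} a h) / (tau_const a q * sqrt h)) \<longlongrightarrow> 1) (at_right 0)"
    by (rule Lim_transform_eventually[OF branch(2)]) (use angles in \<open>eventually_elim, simp\<close>)
qed

lemma eta_left_asymp:
  fixes g :: "real \<Rightarrow> real"
  assumes nu: "0 \<le> \<nu>" "\<nu> < a" and cont: "continuous_on {-a..-\<nu>} g" and ga: "g (-a) = 0"
    and lim: "((\<lambda>x. \<bar>g x\<bar> / f_a a x) \<longlongrightarrow> q) (at_right (-a))" and q: "0 < q" "q < 2"
    and uniq: "\<forall>\<^sub>F h in at_right 0. \<exists>!p. p \<in> graph_on g {-a..-\<nu>} \<inter> frontier (Ball_h a h)"
  shows "((\<lambda>h. (pi - eta_up g {-a..-\<nu>} a h) / (tau_const a q * sqrt h)) \<longlongrightarrow> 1) (at_right 0)"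
    and "((\<lambda>h. (eta_down g {-a..-\<nu>} a h - pi) / (tau_const a q * sqrt h)) \<longlongrightarrow> 1) (at_right 0)"
proof -
  \<comment> \<open>Reflect in the \<open>y\<close>-axis to reduce to a branch ending at \<open>a\<close>.\<close>
  define X where "X h = - xbar g {-a..-\<nu>} a h" for h
  define G where "G x = g (- x)" for x
  have a: "0 < a" using nu by linarith
  note small = eventually_at_right_0_less[OF a]
  have root: "\<forall>\<^sub>F h in at_right 0. X h \<in> {\<nu>..a} \<and> (X h)\<^sup>2 + (G (X h))\<^sup>2 = (a - h)\<^sup>2 \<and>
      (\<forall>x\<in>{\<nu>..a}. x\<^sup>2 + (G x)\<^sup>2 = (a - h)\<^sup>2 \<longrightarrow> x = X h)"
    using uniq small
  proof eventually_elim
    case (elim h)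
    hence "0 < a - h" by simp
    note on_circle = xbar_on_circle[OF this elim(1)]
    have "x = X h" if "x \<in> {\<nu>..a}" "x\<^sup>2 + (G x)\<^sup>2 = (a - h)\<^sup>2" for x
      using on_circle(3)[of "- x"] that unfolding X_def G_def by simp
    thus ?case using on_circle(1,2) unfolding X_def G_def by auto
  qed
  have cont_G: "continuous_on {\<nu>..a} G"
    unfolding G_def by (rule continuous_on_compose2[OF cont]) (auto intro!: continuous_intros)
  have lim_G: "((\<lambda>x. \<bar>G x\<bar> / f_a a x) \<longlongrightarrow> q) (at_left a)"
    using lim unfolding filterlim_at_left_to_right[where a = a] G_def by (simp add: f_a_def)
  have G_a: "G a = 0" using ga by (simp add: G_def)
  note branch = arcsin_branch_asymp[OF a nu(2) cont_G G_a lim_G q root]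
  have angles: "\<forall>\<^sub>F h in at_right 0. pi - eta_up g {-a..-\<nu>} a h = arcsin (\<bar>G (X h)\<bar> / (a - h)) \<and>
      eta_down g {-a..-\<nu>} a h - pi = arcsin (\<bar>G (X h)\<bar> / (a - h))"
    using root branch(1) small
  proof eventually_elim
    case (elim h)
    define x where "x = xbar g {-a..-\<nu>} a h"
    have X: "X h = - x" "G (X h) = g x" by (simp_all add: x_def X_def G_def)
    hence circle: "x\<^sup>2 + \<bar>g x\<bar>\<^sup>2 = (a - h)\<^sup>2" and "x \<le> 0" "0 < a - h" "0 < \<bar>g x\<bar>"
      using nu elim by auto
    moreover have "B_fun a h x = \<bar>g x\<bar>" using B_fun_eq_abs[OF circle] by simp
    ultimately show ?case
      using polar_angle_arcsin(2,3)[OF circle \<open>0 < a - h\<close> \<open>0 < \<bar>g x\<bar>\<close>]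
      unfolding eta_up_def eta_down_def x_def[symmetric] X(2) by simp
  qed
  show "((\<lambda>h. (pi - eta_up g {-a..-\<nu>} a h) / (tau_const a q * sqrt h)) \<longlongrightarrow> 1) (at_right 0)"
    by (rule Lim_transform_eventually[OF branch(2)]) (use angles in \<open>eventually_elim, simp\<close>)
  show "((\<lambda>h. (eta_down g {-a..-\<nu>} a h - pi) / (tau_const a q * sqrt h)) \<longlongrightarrow> 1) (at_right 0)"
    by (rule Lim_transform_eventually[OF branch(2)]) (use angles in \<open>eventually_elim, simp\<close>)
qed

theorem lemma2:
  fixes f :: "real \<times> real \<Rightarrow> real" and E :: "(real \<times> real) set"
    and a \<nu> q1 q2 q3 q4 :: real and g1 g2 g3 g4 :: "real \<Rightarrow> real"
  assumes dens_meas: "f \<in> borel_measurable lborel"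
    and dens_nonneg: "\<And>z. f z \<ge> 0"
    and dens_int: "integrable lborel f"
    and dens_one: "integral\<^sup>L lborel f = 1"
    and supp: "E = closure {z. f z \<noteq> 0}"
    and supp_compact: "compact E"
    \<comment> \<open>(A1)\<close>
    and A1: "a > 0" "diameter E = 2 * a" "Inf (fst ` E) = - a" "Sup (fst ` E) = a"
    \<comment> \<open>(A2)\<close>
    and A2: "\<And>\<epsilon>. \<epsilon> > 0 \<Longrightarrow> diameter (E - (U (- a) \<epsilon> \<union> U a \<epsilon>)) < 2 * a"
    \<comment> \<open>(A3)\<close>
    and A3: "\<And>\<epsilon>. \<epsilon> > 0 \<Longrightarrow>
        emeasure lborel (E \<inter> Q1 \<inter> U a \<epsilon>) > 0 \<and> emeasure lborel (E \<inter> Q4 \<inter> U a \<epsilon>) > 0 \<and>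
        emeasure lborel (E \<inter> Q2 \<inter> U (- a) \<epsilon>) > 0 \<and> emeasure lborel (E \<inter> Q3 \<inter> U (- a) \<epsilon>) > 0"
    \<comment> \<open>(A4)\<close>
    and A4_nu: "0 \<le> \<nu>" "\<nu> < a"
    and A4_right: "continuous_on {\<nu>..a} g1" "continuous_on {\<nu>..a} g4"
       "\<forall>x\<in>{\<nu>..a}. g1 x \<ge> 0" "\<forall>x\<in>{\<nu>..a}. g4 x \<le> 0" "g1 a = 0" "g4 a = 0"
       "interior E \<inter> {z. fst z > \<nu>} = {(x, y). \<nu> < x \<and> x < a \<and> g4 x < y \<and> y < g1 x}"
    and A4_left: "continuous_on {-a..-\<nu>} g2" "continuous_on {-a..-\<nu>} g3"
       "\<forall>x\<in>{-a..-\<nu>}. g2 x \<ge> 0" "\<forall>x\<in>{-a..-\<nu>}. g3 x \<le> 0" "g2 (-a) = 0" "g3 (-a) = 0"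
       "interior E \<inter> {z. fst z < - \<nu>} = {(x, y). - a < x \<and> x < - \<nu> \<and> g3 x < y \<and> y < g2 x}"
    \<comment> \<open>(A5)\<close>
    and A5_q: "q1 \<in> {0<..<2}" "q2 \<in> {0<..<2}" "q3 \<in> {0<..<2}" "q4 \<in> {0<..<2}"
    and A5_lim: "((\<lambda>x. g1 x / f_a a x) \<longlongrightarrow> q1) (at_left a)"
       "((\<lambda>x. - g4 x / f_a a x) \<longlongrightarrow> q4) (at_left a)"
       "((\<lambda>x. g2 x / f_a a x) \<longlongrightarrow> q2) (at_right (- a))"
       "((\<lambda>x. - g3 x / f_a a x) \<longlongrightarrow> q3) (at_right (- a))"
    \<comment> \<open>(A6)\<close>
    and A6: "\<forall>\<^sub>F h in at_right 0.
        interior (E \<inter> Q1) \<inter> {z. \<bar>fst z\<bar> < \<nu>} \<subseteq> Ball_h a h \<and>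
        interior (E \<inter> Q2) \<inter> {z. \<bar>fst z\<bar> < \<nu>} \<subseteq> Ball_h a h \<and>
        interior (E \<inter> Q3) \<inter> {z. \<bar>fst z\<bar> < \<nu>} \<subseteq> Ball_h a h \<and>
        interior (E \<inter> Q4) \<inter> {z. \<bar>fst z\<bar> < \<nu>} \<subseteq> Ball_h a h \<and>
        (\<exists>!p. p \<in> graph_on g1 {\<nu>..a} \<inter> frontier (Ball_h a h)) \<and>
        (\<exists>!p. p \<in> graph_on g2 {-a..-\<nu>} \<inter> frontier (Ball_h a h)) \<and>
        (\<exists>!p. p \<in> graph_on g3 {-a..-\<nu>} \<inter> frontier (Ball_h a h)) \<and>
        (\<exists>!p. p \<in> graph_on g4 {\<nu>..a} \<inter> frontier (Ball_h a h))"
    \<comment> \<open>(A7)\<close>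
    and A7: "\<exists>\<epsilon>>0. continuous_on (E \<inter> U a \<epsilon>) f \<and> continuous_on (E \<inter> U (- a) \<epsilon>) f"
       "f (a, 0) > 0" "f (- a, 0) > 0"
  shows "((\<lambda>h. eta_up g1 {\<nu>..a} a h / (tau_const a q1 * sqrt h)) \<longlongrightarrow> 1) (at_right 0) \<and>
         ((\<lambda>h. (pi - eta_up g2 {-a..-\<nu>} a h) / (tau_const a q2 * sqrt h)) \<longlongrightarrow> 1) (at_right 0) \<and>
         ((\<lambda>h. (eta_down g3 {-a..-\<nu>} a h - pi) / (tau_const a q3 * sqrt h)) \<longlongrightarrow> 1) (at_right 0) \<and>
         ((\<lambda>h. (2 * pi - eta_down g4 {\<nu>..a} a h) / (tau_const a q4 * sqrt h)) \<longlongrightarrow> 1) (at_right 0)"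
proof -
  have nu: "0 \<le> \<nu>" "\<nu> < a" using A4_nu by auto
  have q: "0 < q1" "q1 < 2" "0 < q2" "q2 < 2" "0 < q3" "q3 < 2" "0 < q4" "q4 < 2"
    using A5_q by auto
  have near_a: "\<forall>\<^sub>F x in at_left a. x \<in> {\<nu><..<a}"
    using nu by (intro eventually_at_left_real) simp
  have near_minus_a: "\<forall>\<^sub>F x in at_right (-a). x \<in> {-a<..<-\<nu>}"
    using nu by (intro eventually_at_right_real) simp
  have lim1: "((\<lambda>x. \<bar>g1 x\<bar> / f_a a x) \<longlongrightarrow> q1) (at_left a)"
    by (rule Lim_transform_eventually[OF A5_lim(1)]) (use near_a in \<open>eventually_elim, use A4_right(3) in auto\<close>)
  have lim4: "((\<lambda>x. \<bar>g4 x\<bar> / f_a a x) \<longlongrightarrow> q4) (at_left a)"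
    by (rule Lim_transform_eventually[OF A5_lim(2)]) (use near_a in \<open>eventually_elim, use A4_right(4) in auto\<close>)
  have lim2: "((\<lambda>x. \<bar>g2 x\<bar> / f_a a x) \<longlongrightarrow> q2) (at_right (-a))"
    by (rule Lim_transform_eventually[OF A5_lim(3)]) (use near_minus_a in \<open>eventually_elim, use A4_left(3) in auto\<close>)
  have lim3: "((\<lambda>x. \<bar>g3 x\<bar> / f_a a x) \<longlongrightarrow> q3) (at_right (-a))"
    by (rule Lim_transform_eventually[OF A5_lim(4)]) (use near_minus_a in \<open>eventually_elim, use A4_left(4) in auto\<close>)
  have uniq:
    "\<forall>\<^sub>F h in at_right 0. \<exists>!p. p \<in> graph_on g1 {\<nu>..a} \<inter> frontier (Ball_h a h)"
    "\<forall>\<^sub>F h in at_right 0. \<exists>!p. p \<in> graph_on g2 {-a..-\<nu>} \<inter> frontier (Ball_h a h)"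
    "\<forall>\<^sub>F h in at_right 0. \<exists>!p. p \<in> graph_on g3 {-a..-\<nu>} \<inter> frontier (Ball_h a h)"
    "\<forall>\<^sub>F h in at_right 0. \<exists>!p. p \<in> graph_on g4 {\<nu>..a} \<inter> frontier (Ball_h a h)"
    using A6 by (simp_all only: eventually_conj_iff)
  show ?thesis
    using eta_right_asymp(1)[OF nu A4_right(1,5) lim1 q(1,2) uniq(1)]
      eta_left_asymp(1)[OF nu A4_left(1,5) lim2 q(3,4) uniq(2)]
      eta_left_asymp(2)[OF nu A4_left(2,6) lim3 q(5,6) uniq(3)]
      eta_right_asymp(2)[OF nu A4_right(2,6) lim4 q(7,8) uniq(4)]
    by blast
qed

end
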